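(* Let $\nu(x)=\sum_{k=0}^\infty\nu_kL_k(x)$ on $I=(-1,1)$, and for $m,n\ge2$ let $a^{(1)}_{m,n}:=\int_{-1}^1\nu(x)\,D\eta_m(x)\,D\eta_n(x)\,dx$. If there exist $\eta>0$ and a constant $C_\eta>0$ depending only on $\eta$ such that $|\nu_k|\le C_\eta e^{-\eta k}$ for all $k\ge0$, then $$|a^{(1)}_{m,n}|\le C e^{-\eta|n-m|}\qquad\forall\, n,m\ge2,$$ where $C$ is a constant depending only on $\eta$.
   Context: $I=(-1,1)$, $D=d/dx$. $L_k$ denotes the Legendre polynomial of degree $k$ normalized by $L_k(1)=1$, so $\int_I L_kL_m\,dx=\frac{2}{2k+1}\delta_{km}$. The Babuška–Shen basis is $\eta_k(x)=\sqrt{k-1/2}\int_x^1L_{k-1}(s)\,ds=\frac{1}{\sqrt{4k-2}}(L_{k-2}(x)-L_k(x))$, $k\ge2$; it satisfies $D\eta_k=-\sqrt{k-1/2}\,L_{k-1}$. *)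

theory Defs
  imports "HOL-Analysis.Analysis"
begin

fun legendre :: "nat \<Rightarrow> real \<Rightarrow> real" where
  "legendre 0 x = 1"
| "legendre (Suc 0) x = x"
| "legendre (Suc (Suc k)) x =
     ((2 * real k + 3) * x * legendre (Suc k) x - (real k + 1) * legendre k x) / (real k + 2)"

definition bs_eta :: "nat \<Rightarrow> real \<Rightarrow> real" where
  "bs_eta k x = (legendre (k - 2) x - legendre k x) / sqrt (4 * real k - 2)"

definition legendre_series :: "(nat \<Rightarrow> real) \<Rightarrow> real \<Rightarrow> real" where
  "legendre_series c x = (\<Sum>k. c k * legendre k x)"

definition a1 :: "(nat \<Rightarrow> real) \<Rightarrow> nat \<Rightarrow> nat \<Rightarrow> real" where
  "a1 c m n = integral {-1..1}
     (\<lambda>x. legendre_series c x * deriv (bs_eta m) x * deriv (bs_eta n) x)"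

end

theory Submission
  imports Defs
begin

text \<open>Differentiating the Babuska--Shen basis gives \<open>D eta_m = -sqrt(m - 1/2) L_(m-1)\<close>, so
  \<open>a1 c m n\<close> is the integral of \<open>nu phi_(m-1) phi_(n-1)\<close> against the \<open>L\<^sup>2\<close>-normalised
  Legendre polynomials \<open>phi_i = sqrt(i + 1/2) L_i\<close>. By the three-term recurrence \<open>L_i L_k\<close> is a
  combination of the \<open>L_l\<close> with \<open>l \<le> i + k\<close>, hence every mode \<open>L_k\<close> of \<open>nu\<close> with
  \<open>k < |m - n|\<close> integrates to zero against \<open>L_(m-1) L_(n-1)\<close>. The rest of \<open>nu\<close> is bounded on
  \<open>[-1, 1]\<close> by the geometric tail \<open>C e^(-eta |m - n|) / (1 - e^(-eta))\<close> because \<open>|L_k| \<le> 1\<close>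
  there, and \<open>|phi_i phi_j| \<le> (phi_i\<^sup>2 + phi_j\<^sup>2) / 2\<close> has integral \<open>1\<close>.\<close>

fun legendre' :: "nat \<Rightarrow> real \<Rightarrow> real" where
  "legendre' 0 x = 0"
| "legendre' (Suc 0) x = 1"
| "legendre' (Suc (Suc k)) x =
     ((2 * real k + 3) * (legendre (Suc k) x + x * legendre' (Suc k) x)
       - (real k + 1) * legendre' k x) / (real k + 2)"

fun legendre'' :: "nat \<Rightarrow> real \<Rightarrow> real" where
  "legendre'' 0 x = 0"
| "legendre'' (Suc 0) x = 0"
| "legendre'' (Suc (Suc k)) x =
     ((2 * real k + 3) * (2 * legendre' (Suc k) x + x * legendre'' (Suc k) x)
       - (real k + 1) * legendre'' k x) / (real k + 2)"

lemma legendre_recurrence: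
  "(real k + 1) * legendre (Suc k) x = (2 * real k + 1) * x * legendre k x - real k * legendre (k - 1) x"
  by (cases k) (simp_all add: field_simps)

lemma legendre'_recurrence:
  "(real k + 1) * legendre' (Suc k) x
     = (2 * real k + 1) * (legendre k x + x * legendre' k x) - real k * legendre' (k - 1) x"
  by (cases k) (simp_all add: field_simps)

lemma has_real_derivative_legendre: "(legendre k has_real_derivative legendre' k x) (at x)"
proof (induction k x rule: legendre.induct)
  case (3 k x)
  have eq: "legendre (Suc (Suc k))
      = (\<lambda>y. ((2 * real k + 3) * y * legendre (Suc k) y - (real k + 1) * legendre k y) / (real k + 2))"
    by (rule ext) simp
  show ?case
    unfolding eq by (rule derivative_eq_intros 3 refl | simp)+ (simp add: field_simps)
qed simp_all

lemma has_real_derivative_legendre': "(legendre' k has_real_derivative legendre'' k x) (at x)"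
proof (induction k x rule: legendre.induct)
  case (3 k x)
  have eq: "legendre' (Suc (Suc k))
      = (\<lambda>y. ((2 * real k + 3) * (legendre (Suc k) y + y * legendre' (Suc k) y)
               - (real k + 1) * legendre' k y) / (real k + 2))"
    by (rule ext) simp
  show ?case
    unfolding eq by (rule derivative_eq_intros 3 has_real_derivative_legendre refl | simp)+
qed simp_all

lemma continuous_on_legendre [continuous_intros]:
  "continuous_on S f \<Longrightarrow> continuous_on S (\<lambda>x. legendre k (f x))"
  by (rule continuous_on_compose2[of UNIV "legendre k"])
     (auto intro!: continuous_at_imp_continuous_on DERIV_isCont has_real_derivative_legendre)

lemma legendre_one [simp]: "legendre k 1 = 1"
  by (induction k "1::real" rule: legendre.induct) (simp_all add: field_simps)

lemma legendre_minus: "legendre k (- x) = (-1) ^ k * legendre k x"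
  by (induction k x rule: legendre.induct) (simp_all add: field_simps)

lemma legendre'_Suc_identities:
  "x * legendre' (Suc k) x - legendre' k x = (real k + 1) * legendre (Suc k) x
   \<and> legendre' (Suc k) x = x * legendre' k x + (real k + 1) * legendre k x"
proof (induction k)
  case (Suc k)
  let ?L = legendre and ?D = legendre'
  have pred: "?D k x = x * ?D (Suc k) x - (real k + 1) * ?L (Suc k) x"
    and Suc_eq: "?D (Suc k) x = x * ?D k x + (real k + 1) * ?L k x"
    using Suc.IH by linarith+
  have "(real k + 2) * ?D (Suc (Suc k)) x
      = (2 * real k + 3) * (?L (Suc k) x + x * ?D (Suc k) x) - (real k + 1) * ?D k x"
    using legendre'_recurrence[of "Suc k" x] by (simp add: algebra_simps)
  also have "\<dots> = (real k + 2) * (x * ?D (Suc k) x + (real k + 2) * ?L (Suc k) x)"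
    unfolding pred by (simp add: algebra_simps)
  finally have Suc_Suc_eq: "?D (Suc (Suc k)) x = x * ?D (Suc k) x + (real k + 2) * ?L (Suc k) x"
    by simp
  have "?D (Suc k) x = x * (x * ?D (Suc k) x - (real k + 1) * ?L (Suc k) x) + (real k + 1) * ?L k x"
    using Suc_eq pred by simp
  then have weighted: "(x\<^sup>2 - 1) * ?D (Suc k) x = (real k + 1) * (x * ?L (Suc k) x - ?L k x)"
    by (simp add: algebra_simps power2_eq_square)
  have "x * ?D (Suc (Suc k)) x - ?D (Suc k) x
      = (x\<^sup>2 - 1) * ?D (Suc k) x + (real k + 2) * x * ?L (Suc k) x"
    unfolding Suc_Suc_eq by (simp add: algebra_simps power2_eq_square)
  also have "\<dots> = (real k + 2) * ?L (Suc (Suc k)) x"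
    using legendre_recurrence[of "Suc k" x] unfolding weighted by (simp add: algebra_simps)
  finally show ?case
    using Suc_Suc_eq by (simp del: legendre'.simps legendre.simps add: algebra_simps)
qed simp

lemma legendre'_Suc_eq: "legendre' (Suc k) x = x * legendre' k x + (real k + 1) * legendre k x"
  using legendre'_Suc_identities by blast

lemma legendre'_pred_eq: "x * legendre' k x - legendre' (k - 1) x = real k * legendre k x"
  using legendre'_Suc_identities[where k = "k - 1" and x = x] by (cases k) auto

lemma legendre'_Suc_minus_pred:
  "legendre' (Suc k) x - legendre' (k - 1) x = (2 * real k + 1) * legendre k x"
  using legendre'_pred_eq[of x k] legendre'_Suc_eq[of k x] by (simp add: algebra_simps)

lemma square_minus_one_mult_legendre':
  "(x\<^sup>2 - 1) * legendre' k x = real k * (x * legendre k x - legendre (k - 1) x)"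
proof (cases k)
  case (Suc j)
  have pred: "legendre' j x = x * legendre' (Suc j) x - (real j + 1) * legendre (Suc j) x"
    and Suc_eq: "legendre' (Suc j) x = x * legendre' j x + (real j + 1) * legendre j x"
    using legendre'_Suc_identities[where k = j and x = x] by linarith+
  have "legendre' (Suc j) x
      = x * (x * legendre' (Suc j) x - (real j + 1) * legendre (Suc j) x) + (real j + 1) * legendre j x"
    using Suc_eq pred by simp
  then show ?thesis
    using Suc by (simp add: algebra_simps power2_eq_square)
qed simp

lemma legendre_ode:
  "(1 - x\<^sup>2) * legendre'' k x - 2 * x * legendre' k x = - (real k * (real k + 1)) * legendre k x"
proof -
  have "((\<lambda>y. (y\<^sup>2 - 1) * legendre' k y)
          has_real_derivative (2 * x * legendre' k x + (x\<^sup>2 - 1) * legendre'' k x)) (at x)"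
    by (rule derivative_eq_intros has_real_derivative_legendre' refl | simp)+
  moreover have "((\<lambda>y. (y\<^sup>2 - 1) * legendre' k y) has_real_derivative
          real k * (legendre k x + x * legendre' k x - legendre' (k - 1) x)) (at x)"
    unfolding square_minus_one_mult_legendre'
    by (rule derivative_eq_intros has_real_derivative_legendre refl | simp)+
  ultimately have "2 * x * legendre' k x + (x\<^sup>2 - 1) * legendre'' k x
      = real k * (legendre k x + x * legendre' k x - legendre' (k - 1) x)"
    by (rule DERIV_unique)
  also have "\<dots> = real k * (real k + 1) * legendre k x"
    using legendre'_pred_eq[of x k] by (simp add: algebra_simps)
  finally show ?thesis
    by (simp add: algebra_simps)
qed

declare legendre.simps(3) [simp del] legendre'.simps(3) [simp del] legendre''.simps(3) [simp del]

text \<open>By the Legendre equation in Sturm--Liouville form, the Wronskian-type expression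
  \<open>(1 - x\<^sup>2) (L_j' L_k - L_j L_k')\<close> is an antiderivative of a nonzero multiple of \<open>L_j L_k\<close>,
  and it vanishes at \<open>\<plusminus>1\<close>.\<close>
lemma legendre_orthogonal:
  assumes "j \<noteq> k"
  shows "integral {-1..1} (\<lambda>x. legendre j x * legendre k x) = 0"
proof -
  define F where "F y = (1 - y\<^sup>2) * (legendre' j y * legendre k y - legendre j y * legendre' k y)" for y
  define c where "c = real k * (real k + 1) - real j * (real j + 1)"
  have F_deriv: "(F has_real_derivative c * (legendre j x * legendre k x)) (at x)" for x
  proof -
    have "(F has_real_derivative - 2 * x * (legendre' j x * legendre k x - legendre j x * legendre' k x)
          + (1 - x\<^sup>2) * (legendre'' j x * legendre k x - legendre j x * legendre'' k x)) (at x)"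
      unfolding F_def[abs_def]
      by (rule derivative_eq_intros has_real_derivative_legendre has_real_derivative_legendre' refl)+
         (simp add: algebra_simps)
    also have "- 2 * x * (legendre' j x * legendre k x - legendre j x * legendre' k x)
          + (1 - x\<^sup>2) * (legendre'' j x * legendre k x - legendre j x * legendre'' k x)
        = legendre k x * ((1 - x\<^sup>2) * legendre'' j x - 2 * x * legendre' j x)
          - legendre j x * ((1 - x\<^sup>2) * legendre'' k x - 2 * x * legendre' k x)"
      by (simp add: algebra_simps)
    also have "\<dots> = c * (legendre j x * legendre k x)"
      unfolding legendre_ode c_def by (simp add: algebra_simps)
    finally show ?thesis .
  qed
  have "((\<lambda>x. c * (legendre j x * legendre k x)) has_integral F 1 - F (-1)) {-1..1}"
    by (rule fundamental_theorem_of_calculus)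
       (auto intro!: has_vector_derivative_at_within
         F_deriv[unfolded has_real_derivative_iff_has_vector_derivative])
  then have "((\<lambda>x. c * (legendre j x * legendre k x)) has_integral 0) {-1..1}"
    by (simp add: F_def)
  then have "integral {-1..1} (\<lambda>x. c * (legendre j x * legendre k x)) = 0"
    by (rule integral_unique)
  then have "c * integral {-1..1} (\<lambda>x. legendre j x * legendre k x) = 0"
    by simp
  moreover have "c \<noteq> 0"
  proof
    assume "c = 0"
    then have "(real k - real j) * (real k + real j + 1) = 0"
      unfolding c_def by (simp add: algebra_simps)
    with assms show False
      by (simp add: add_nonneg_eq_0_iff)
  qed
  ultimately show ?thesis
    by simp
qed

lemma legendre_norm_sq:
  "integral {-1..1} (\<lambda>x. legendre k x * legendre k x) = 2 / (2 * real k + 1)"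
proof (induction k)
  case (Suc k)
  let ?L = legendre
  have expand: "(real k + 1) * (2 * real k + 3) * (?L (Suc k) x * ?L (Suc k) x)
     = (2 * real k + 1) * (real k + 2) * (?L k x * ?L (Suc (Suc k)) x)
       + (2 * real k + 1) * (real k + 1) * (?L k x * ?L k x)
       - real k * (2 * real k + 3) * (?L (Suc k) x * ?L (k - 1) x)" for x
  proof -
    have "(real k + 1) * (2 * real k + 3) * (?L (Suc k) x * ?L (Suc k) x)
        = (2 * real k + 3) * ?L (Suc k) x * ((real k + 1) * ?L (Suc k) x)"
      by (simp add: algebra_simps)
    also have "\<dots> = (2 * real k + 3) * ?L (Suc k) x * ((2 * real k + 1) * x * ?L k x - real k * ?L (k - 1) x)"
      by (simp only: legendre_recurrence)
    also have "\<dots> = (2 * real k + 1) * ?L k x * ((2 * real k + 3) * x * ?L (Suc k) x)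
        - real k * (2 * real k + 3) * (?L (Suc k) x * ?L (k - 1) x)"
      by (simp add: algebra_simps)
    also have "(2 * real k + 3) * x * ?L (Suc k) x
        = (real k + 2) * ?L (Suc (Suc k)) x + (real k + 1) * ?L k x"
      using legendre_recurrence[of "Suc k" x] by (simp add: algebra_simps)
    finally show ?thesis
      by (simp add: algebra_simps)
  qed
  have "(real k + 1) * (2 * real k + 3) * integral {-1..1} (\<lambda>x. ?L (Suc k) x * ?L (Suc k) x)
      = (2 * real k + 1) * (real k + 2) * integral {-1..1} (\<lambda>x. ?L k x * ?L (Suc (Suc k)) x)
       + (2 * real k + 1) * (real k + 1) * integral {-1..1} (\<lambda>x. ?L k x * ?L k x)
       - real k * (2 * real k + 3) * integral {-1..1} (\<lambda>x. ?L (Suc k) x * ?L (k - 1) x)"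
    unfolding integral_mult_right[symmetric] expand
    by (simp add: integral_add integral_diff integrable_continuous_interval continuous_intros)
  also have "\<dots> = (2 * real k + 1) * (real k + 1) * (2 / (2 * real k + 1))"
    using legendre_orthogonal[of k "Suc (Suc k)"] legendre_orthogonal[of "Suc k" "k - 1"] Suc.IH
    by simp
  also have "\<dots> = (real k + 1) * 2"
    by (simp add: field_simps)
  finally have "(real k + 1) * ((2 * real k + 3) * integral {-1..1} (\<lambda>x. ?L (Suc k) x * ?L (Suc k) x))
      = (real k + 1) * 2"
    by (simp only: mult.assoc)
  then have "(2 * real k + 3) * integral {-1..1} (\<lambda>x. ?L (Suc k) x * ?L (Suc k) x) = 2"
    by (subst (asm) mult_left_cancel) auto
  then show ?case
    by (simp add: field_simps)
qed simp

lemma integral_normalized_legendre_square: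
  "integral {-1..1} (\<lambda>x. (sqrt (real k + 1 / 2) * legendre k x)\<^sup>2) = 1"
proof -
  have "(sqrt (real k + 1 / 2) * legendre k x)\<^sup>2 = (real k + 1 / 2) * (legendre k x * legendre k x)" for x
    by (simp add: power_mult_distrib power2_eq_square)
  then have "integral {-1..1} (\<lambda>x. (sqrt (real k + 1 / 2) * legendre k x)\<^sup>2)
      = (real k + 1 / 2) * integral {-1..1} (\<lambda>x. legendre k x * legendre k x)"
    by simp
  then show ?thesis
    by (simp add: legendre_norm_sq field_simps)
qed

text \<open>Induction on \<open>k\<close>, using the recurrence on both \<open>L_k\<close> and \<open>x L_i\<close>; this expresses that
  \<open>L_i L_k\<close> is a combination of the \<open>L_l\<close> with \<open>l \<le> i + k\<close>.\<close>
lemma legendre_triple_integral_eq_0: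
  "i + k < j \<Longrightarrow> integral {-1..1} (\<lambda>x. legendre i x * legendre k x * legendre j x) = 0"
proof (induction k arbitrary: i rule: less_induct)
  case (less k)
  show ?case
  proof (cases k)
    case 0
    then show ?thesis
      using legendre_orthogonal[of i j] less.prems by simp
  next
    case (Suc m)
    let ?L = legendre
    have expand: "(real m + 1) * (2 * real i + 1) * (?L i x * ?L (Suc m) x * ?L j x)
      = (2 * real m + 1) * (real i + 1) * (?L (Suc i) x * ?L m x * ?L j x)
      + (2 * real m + 1) * real i * (?L (i - 1) x * ?L m x * ?L j x)
      - real m * (2 * real i + 1) * (?L i x * ?L (m - 1) x * ?L j x)" for x
    proof -
      have "(real m + 1) * (2 * real i + 1) * (?L i x * ?L (Suc m) x * ?L j x)
          = (2 * real i + 1) * ?L i x * ?L j x * ((real m + 1) * ?L (Suc m) x)"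
        by (simp add: algebra_simps)
      also have "\<dots> = (2 * real i + 1) * ?L i x * ?L j x
            * ((2 * real m + 1) * x * ?L m x - real m * ?L (m - 1) x)"
        by (simp only: legendre_recurrence)
      also have "\<dots> = (2 * real m + 1) * ?L m x * ?L j x * ((2 * real i + 1) * x * ?L i x)
          - real m * (2 * real i + 1) * (?L i x * ?L (m - 1) x * ?L j x)"
        by (simp add: algebra_simps)
      also have "(2 * real i + 1) * x * ?L i x = (real i + 1) * ?L (Suc i) x + real i * ?L (i - 1) x"
        using legendre_recurrence[of i x] by (simp add: algebra_simps)
      finally show ?thesis
        by (simp add: algebra_simps)
    qed
    have "integral {-1..1} (\<lambda>x. ?L (Suc i) x * ?L m x * ?L j x) = 0"
      and "integral {-1..1} (\<lambda>x. ?L (i - 1) x * ?L m x * ?L j x) = 0"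
      and "integral {-1..1} (\<lambda>x. ?L i x * ?L (m - 1) x * ?L j x) = 0"
      using less.IH[of m "Suc i"] less.IH[of m "i - 1"] less.IH[of "m - 1" i] less.prems Suc
      by simp_all
    then have "(real m + 1) * (2 * real i + 1) * integral {-1..1} (\<lambda>x. ?L i x * ?L (Suc m) x * ?L j x) = 0"
      unfolding integral_mult_right[symmetric] expand
      by (simp add: integral_add integral_diff integrable_continuous_interval continuous_intros)
    then show ?thesis
      using Suc by simp
  qed
qed

text \<open>The energy \<open>L_k\<^sup>2 + (1 - x\<^sup>2) L_k'\<^sup>2 / (k (k + 1))\<close> dominates \<open>L_k\<^sup>2\<close> and, by the Legendre
  equation, has derivative \<open>2 x L_k'\<^sup>2 / (k (k + 1)) \<ge> 0\<close> on \<open>[0, 1]\<close>, where it ends at \<open>1\<close>.\<close>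
lemma legendre_square_le_1_nonneg:
  assumes "0 \<le> x" "x \<le> 1"
  shows "(legendre k x)\<^sup>2 \<le> 1"
proof (cases "k = 0")
  case False
  define K where "K = real k * (real k + 1)"
  have K: "K > 0"
    using False by (simp add: K_def)
  define f where "f y = (legendre k y)\<^sup>2 + 1 / K * ((1 - y\<^sup>2) * (legendre' k y)\<^sup>2)" for y
  have f_deriv: "(f has_real_derivative 2 * y * (legendre' k y)\<^sup>2 / K) (at y)" for y
  proof -
    have ode: "(1 - y\<^sup>2) * legendre'' k y = 2 * y * legendre' k y - K * legendre k y"
      using legendre_ode[of y k] unfolding K_def by (simp add: algebra_simps)
    have "(f has_real_derivative 2 * legendre k y * legendre' k y
        + (- 2 * y * (legendre' k y)\<^sup>2 + 2 * legendre' k y * ((1 - y\<^sup>2) * legendre'' k y)) / K) (at y)"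
      unfolding f_def[abs_def]
      by (rule derivative_eq_intros has_real_derivative_legendre has_real_derivative_legendre' refl)+
         (simp add: field_simps power2_eq_square)
    also have "2 * legendre k y * legendre' k y
        + (- 2 * y * (legendre' k y)\<^sup>2 + 2 * legendre' k y * ((1 - y\<^sup>2) * legendre'' k y)) / K
        = 2 * y * (legendre' k y)\<^sup>2 / K"
      unfolding ode using K by (simp add: field_simps power2_eq_square)
    finally show ?thesis .
  qed
  have "f x \<le> f 1"
  proof (rule DERIV_nonneg_imp_nondecreasing[OF assms(2)])
    fix y assume "x \<le> y" "y \<le> 1"
    then have "0 \<le> 2 * y * (legendre' k y)\<^sup>2 / K"
      using assms K by simp
    then show "\<exists>z. (f has_real_derivative z) (at y) \<and> 0 \<le> z"
      using f_deriv by blast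
  qed
  moreover have "(legendre k x)\<^sup>2 \<le> f x"
    unfolding f_def using K assms by (auto simp: abs_square_le_1)
  ultimately show ?thesis
    by (simp add: f_def)
qed simp

lemma abs_legendre_le_1:
  assumes "-1 \<le> x" "x \<le> 1"
  shows "\<bar>legendre k x\<bar> \<le> 1"
proof -
  have "\<bar>legendre k x\<bar> = \<bar>legendre k \<bar>x\<bar>\<bar>"
    by (cases "0 \<le> x") (simp_all add: legendre_minus abs_mult power_abs)
  then show ?thesis
    using legendre_square_le_1_nonneg[of "\<bar>x\<bar>" k] assms by (simp add: abs_square_le_1)
qed

lemma deriv_bs_eta:
  assumes "2 \<le> m"
  shows "deriv (bs_eta m) x = - sqrt (real m - 1 / 2) * legendre (m - 1) x"
proof -
  have eq: "bs_eta m = (\<lambda>y. 1 / sqrt (4 * real m - 2) * (legendre (m - 2) y - legendre m y))"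
    by (rule ext) (simp add: bs_eta_def)
  have bs_eta_deriv: "(bs_eta m has_real_derivative
      (legendre' (m - 2) x - legendre' m x) / sqrt (4 * real m - 2)) (at x)"
    unfolding eq by (rule derivative_eq_intros has_real_derivative_legendre refl | simp)+
  have "legendre' m x - legendre' (m - 2) x = (2 * real m - 1) * legendre (m - 1) x"
    using legendre'_Suc_minus_pred[of "m - 1" x] assms
    by (simp add: Suc_diff_Suc numeral_2_eq_2 of_nat_diff algebra_simps)
  then have deriv_eq: "(legendre' (m - 2) x - legendre' m x) / sqrt (4 * real m - 2)
      = - ((2 * real m - 1) / sqrt (4 * real m - 2)) * legendre (m - 1) x"
    by (metis minus_diff_eq minus_divide_left minus_mult_left times_divide_eq_left)
  have weight_eq: "(2 * real m - 1) / sqrt (4 * real m - 2) = sqrt (real m - 1 / 2)"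
  proof -
    have "4 * real m - 2 = 2 * (2 * real m - 1)" "real m - 1 / 2 = (2 * real m - 1) / 2"
      by simp_all
    then have "sqrt (4 * real m - 2) = sqrt 2 * sqrt (2 * real m - 1)"
      and "sqrt (real m - 1 / 2) = sqrt (2 * real m - 1) / sqrt 2"
      by (simp_all only: real_sqrt_mult real_sqrt_divide)
    moreover have "0 \<le> 2 * real m - 1"
      using assms by simp
    ultimately show ?thesis
      using real_div_sqrt[of "2 * real m - 1"] by (metis divide_divide_eq_left mult.commute)
  qed
  show ?thesis
    using bs_eta_deriv unfolding deriv_eq weight_eq by (rule DERIV_imp_deriv)
qed

lemma a1_eq:
  assumes "2 \<le> m" "2 \<le> n"
  shows "a1 c m n = sqrt (real m - 1 / 2) * sqrt (real n - 1 / 2)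
           * integral {-1..1} (\<lambda>x. legendre_series c x * legendre (m - 1) x * legendre (n - 1) x)"
proof -
  have "a1 c m n = integral {-1..1} (\<lambda>x. (sqrt (real m - 1 / 2) * sqrt (real n - 1 / 2))
           * (legendre_series c x * legendre (m - 1) x * legendre (n - 1) x))"
    unfolding a1_def deriv_bs_eta[OF assms(1)] deriv_bs_eta[OF assms(2)]
    by (simp add: algebra_simps)
  then show ?thesis
    by (simp only: integral_mult_right)
qed

lemma abs_mult_legendre_le:
  "-1 \<le> x \<Longrightarrow> x \<le> 1 \<Longrightarrow> \<bar>a * legendre k x\<bar> \<le> \<bar>a\<bar>"
  using abs_legendre_le_1[of x k] by (simp add: abs_mult mult_left_le)

lemma summable_legendre_series:
  assumes "\<And>k. \<bar>c k\<bar> \<le> B * q ^ k" "0 \<le> q" "q < 1" "-1 \<le> x" "x \<le> 1"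
  shows "summable (\<lambda>k. c k * legendre k x)"
proof (rule summable_comparison_test')
  show "summable (\<lambda>k. B * q ^ k)"
    using assms by (intro summable_mult summable_geometric) simp
  show "norm (c k * legendre k x) \<le> B * q ^ k" for k
    using order_trans[OF abs_mult_legendre_le[OF assms(4,5)] assms(1)] by simp
qed

lemma legendre_series_tail_bound:
  assumes "\<And>k. \<bar>c k\<bar> \<le> B * q ^ k" "0 \<le> q" "q < 1" "-1 \<le> x" "x \<le> 1"
  shows "\<bar>legendre_series c x - (\<Sum>k<d. c k * legendre k x)\<bar> \<le> B * q ^ d / (1 - q)"
proof -
  have tail_le: "norm (c (k + d) * legendre (k + d) x) \<le> B * q ^ d * q ^ k" for k
    using abs_mult_legendre_le[of x "c (k + d)" "k + d"] assms(1)[of "k + d"] assms(4,5)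
    by (simp add: power_add mult_ac)
  have geometric: "summable (\<lambda>k. B * q ^ d * q ^ k)"
    using assms by (intro summable_mult summable_geometric) simp
  have "legendre_series c x - (\<Sum>k<d. c k * legendre k x) = (\<Sum>k. c (k + d) * legendre (k + d) x)"
    unfolding legendre_series_def
    using suminf_split_initial_segment[OF summable_legendre_series[OF assms], of d] by simp
  also have "\<bar>\<dots>\<bar> \<le> (\<Sum>k. B * q ^ d * q ^ k)"
    using norm_suminf_le[OF tail_le geometric] by simp
  also have "\<dots> = B * q ^ d / (1 - q)"
    using assms by (simp add: suminf_mult suminf_geometric)
  finally show ?thesis .
qed

lemma continuous_on_legendre_series:
  assumes "\<And>k. \<bar>c k\<bar> \<le> B * q ^ k" "0 \<le> q" "q < 1"
  shows "continuous_on {-1..1} (legendre_series c)"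
proof -
  have limit: "uniform_limit {-1..1} (\<lambda>N x. \<Sum>k<N. c k * legendre k x) (legendre_series c) sequentially"
    unfolding legendre_series_def[abs_def]
  proof (rule Weierstrass_m_test)
    show "summable (\<lambda>k. B * q ^ k)"
      using assms by (intro summable_mult summable_geometric) simp
    show "norm (c k * legendre k x) \<le> B * q ^ k" if "x \<in> {-1..1}" for k x
      using order_trans[OF abs_mult_legendre_le assms(1)] that by simp
  qed
  show ?thesis
    by (rule uniform_limit_theorem[OF _ limit]) (auto intro!: always_eventually continuous_intros)
qed

lemma integral_legendre_sum_mult_legendre_legendre_eq_0:
  assumes "d \<le> nat \<bar>int i - int j\<bar>"
  shows "integral {-1..1} (\<lambda>x. (\<Sum>k<d. c k * legendre k x) * legendre i x * legendre j x) = 0"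
proof -
  have "integral {-1..1} (\<lambda>x. legendre k x * legendre i x * legendre j x) = 0" if "k < d" for k
  proof (cases "i \<le> j")
    case True
    then show ?thesis
      using legendre_triple_integral_eq_0[of i k j] that assms by (simp add: mult_ac)
  next
    case False
    then show ?thesis
      using legendre_triple_integral_eq_0[of j k i] that assms by (simp add: mult_ac)
  qed
  then show ?thesis
    by (simp add: sum_distrib_right mult.assoc integral_sum integrable_continuous_interval
        continuous_intros)
qed

text \<open>Pointwise AM--GM for the normalised polynomials \<open>sqrt(i + 1/2) L_i\<close>, whose squares
  integrate to \<open>1\<close>.\<close>
lemma abs_integral_mult_legendre_legendre_le:
  assumes "continuous_on {-1..1} t" "\<And>x. x \<in> {-1..1} \<Longrightarrow> \<bar>t x\<bar> \<le> T"
  shows "sqrt (real i + 1 / 2) * sqrt (real j + 1 / 2)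
           * \<bar>integral {-1..1} (\<lambda>x. t x * legendre i x * legendre j x)\<bar> \<le> T"
proof -
  define a where "a = sqrt (real i + 1 / 2)"
  define b where "b = sqrt (real j + 1 / 2)"
  define u where "u x = a * legendre i x" for x
  define v where "v x = b * legendre j x" for x
  have T: "0 \<le> T"
    using assms(2)[of 0] by simp
  have unit_norm: "integral {-1..1} (\<lambda>x. (u x)\<^sup>2) = 1" "integral {-1..1} (\<lambda>x. (v x)\<^sup>2) = 1"
    unfolding u_def v_def a_def b_def by (rule integral_normalized_legendre_square)+
  have "(\<lambda>x. t x * u x * v x) = (\<lambda>x. (a * b) * (t x * legendre i x * legendre j x))"
    by (auto simp: u_def v_def mult_ac)
  then have "a * b * \<bar>integral {-1..1} (\<lambda>x. t x * legendre i x * legendre j x)\<bar>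
      = norm (integral {-1..1} (\<lambda>x. t x * u x * v x))"
    by (simp add: abs_mult a_def b_def)
  also have "\<dots> \<le> integral {-1..1} (\<lambda>x. T / 2 * (u x)\<^sup>2 + T / 2 * (v x)\<^sup>2)"
  proof (rule integral_norm_bound_integral)
    show "(\<lambda>x. t x * u x * v x) integrable_on {-1..1}"
      "(\<lambda>x. T / 2 * (u x)\<^sup>2 + T / 2 * (v x)\<^sup>2) integrable_on {-1..1}"
      unfolding u_def v_def
      by (intro integrable_continuous_interval continuous_intros assms(1))+
    show "norm (t x * u x * v x) \<le> T / 2 * (u x)\<^sup>2 + T / 2 * (v x)\<^sup>2" if "x \<in> {-1..1}" for x
    proof -
      have "\<bar>u x\<bar> * \<bar>v x\<bar> \<le> ((u x)\<^sup>2 + (v x)\<^sup>2) / 2"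
        using sum_squares_bound[of "\<bar>u x\<bar>" "\<bar>v x\<bar>"] by simp
      then have "\<bar>t x\<bar> * (\<bar>u x\<bar> * \<bar>v x\<bar>) \<le> T * (((u x)\<^sup>2 + (v x)\<^sup>2) / 2)"
        using assms(2)[OF that] T by (intro mult_mono) auto
      then show ?thesis
        by (simp add: abs_mult algebra_simps)
    qed
  qed
  also have "\<dots> = T"
    using unit_norm unfolding u_def v_def
    by (simp add: integral_add integrable_continuous_interval continuous_intros)
  finally show ?thesis
    unfolding a_def b_def .
qed

lemma abs_a1_le:
  assumes "\<And>k. \<bar>c k\<bar> \<le> B * q ^ k" "0 \<le> q" "q < 1" "2 \<le> m" "2 \<le> n"
  shows "\<bar>a1 c m n\<bar> \<le> B * q ^ nat \<bar>int m - int n\<bar> / (1 - q)"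
proof -
  define d where "d = nat \<bar>int m - int n\<bar>"
  define p where "p x = (\<Sum>k<d. c k * legendre k x)" for x
  define t where "t x = legendre_series c x - p x" for x
  have "continuous_on {-1..1} (legendre_series c)"
    by (rule continuous_on_legendre_series[OF assms(1-3)])
  then have t_cont: "continuous_on {-1..1} t"
    unfolding t_def[abs_def] p_def by (intro continuous_on_diff) (auto intro!: continuous_intros)
  have "integral {-1..1} (\<lambda>x. legendre_series c x * legendre (m - 1) x * legendre (n - 1) x)
      = integral {-1..1} (\<lambda>x. t x * legendre (m - 1) x * legendre (n - 1) x)
        + integral {-1..1} (\<lambda>x. p x * legendre (m - 1) x * legendre (n - 1) x)"
  proof -
    have "legendre_series c x * legendre (m - 1) x * legendre (n - 1) x
        = t x * legendre (m - 1) x * legendre (n - 1) x + p x * legendre (m - 1) x * legendre (n - 1) x"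
      for x
      by (simp add: t_def algebra_simps)
    then show ?thesis
      by (simp only:) (rule integral_add;
          auto intro!: integrable_continuous_interval continuous_intros t_cont simp: p_def)
  qed
  also have "integral {-1..1} (\<lambda>x. p x * legendre (m - 1) x * legendre (n - 1) x) = 0"
    unfolding p_def using assms(4,5)
    by (intro integral_legendre_sum_mult_legendre_legendre_eq_0) (simp add: d_def)
  finally have "\<bar>a1 c m n\<bar> = sqrt (real (m - 1) + 1 / 2) * sqrt (real (n - 1) + 1 / 2)
      * \<bar>integral {-1..1} (\<lambda>x. t x * legendre (m - 1) x * legendre (n - 1) x)\<bar>"
    using assms(4,5) by (simp add: a1_eq abs_mult of_nat_diff)
  also have "\<dots> \<le> B * q ^ d / (1 - q)"
    using t_cont legendre_series_tail_bound[OF assms(1-3)]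
    by (intro abs_integral_mult_legendre_legendre_le) (auto simp: t_def p_def)
  finally show ?thesis
    unfolding d_def .
qed

theorem mainTheorem2:
  fixes \<eta> C\<^sub>\<eta> :: real
  assumes "\<eta> > 0" and "C\<^sub>\<eta> > 0"
  shows "\<exists>C>0. \<forall>c :: nat \<Rightarrow> real.
           (\<forall>k. \<bar>c k\<bar> \<le> C\<^sub>\<eta> * exp (- \<eta> * real k)) \<longrightarrow>
           (\<forall>m n. 2 \<le> m \<longrightarrow> 2 \<le> n \<longrightarrow>
              \<bar>a1 c m n\<bar> \<le> C * exp (- \<eta> * \<bar>real n - real m\<bar>))"
proof -
  define q where "q = exp (- \<eta>)"
  have q: "0 \<le> q" "q < 1"
    unfolding q_def using assms by auto
  have exp_eq: "exp (- \<eta> * real k) = q ^ k" for k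
    unfolding q_def by (simp flip: exp_of_nat_mult add: mult.commute)
  show ?thesis
  proof (intro exI[of _ "C\<^sub>\<eta> / (1 - q)"] conjI allI impI)
    show "C\<^sub>\<eta> / (1 - q) > 0"
      using q assms by simp
    fix c :: "nat \<Rightarrow> real" and m n :: nat
    assume "\<forall>k. \<bar>c k\<bar> \<le> C\<^sub>\<eta> * exp (- \<eta> * real k)" "2 \<le> m" "2 \<le> n"
    then have "\<bar>a1 c m n\<bar> \<le> C\<^sub>\<eta> * q ^ nat \<bar>int m - int n\<bar> / (1 - q)"
      using q by (intro abs_a1_le) (auto simp flip: exp_eq)
    also have "q ^ nat \<bar>int m - int n\<bar> = exp (- \<eta> * \<bar>real n - real m\<bar>)"
    proof -
      have "real (nat \<bar>int m - int n\<bar>) = \<bar>real n - real m\<bar>"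
        by linarith
      then show ?thesis
        using exp_eq[of "nat \<bar>int m - int n\<bar>"] by simp
    qed
    finally show "\<bar>a1 c m n\<bar> \<le> C\<^sub>\<eta> / (1 - q) * exp (- \<eta> * \<bar>real n - real m\<bar>)"
      by simp
  qed
qed

end
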